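(* Let $D' \in \mathrm{Sym}_n(\mathbb{R}_{\geq 0})$ be a corrupted distance matrix. Then the Increase Only Metric Repair algorithm described below returns a perturbation $P$ with $0\preceq P$ such that $D'+P$ is metric, and it runs in time $O(n^3)$.
   Context: $\mathrm{Sym}_n(\mathbb{R}_{\geq 0})$ denotes the symmetric $n\times n$ matrices with nonnegative entries. $D$ is metric if $D_{ii}=0$ for all $i$ and $D_{ij}\le D_{ik}+D_{jk}$ for all $i,j,k$. $A\preceq B$ means entrywise $\le$. The Increase Only Metric Repair algorithm: set $\widehat{D}=D'$ (a symmetric matrix, updates being made symmetrically). For $k=1,\dots,n$, for $i=1,\dots,n$, for $j=1,\dots,i-1$: if $\widehat{D}_{ij} > \widehat{D}_{ik}+\widehat{D}_{kj}$, set $\widehat{D}_{ik}=\widehat{D}_{ki}=\widehat{D}_{ij}-\widehat{D}_{kj}$. Output $P=\widehat{D}-D'$. *)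

theory Defs
  imports Complex_Main
begin

text \<open>n x n matrices are represented as functions nat => nat => real, indices 0..n-1.\<close>

definition is_metric :: "nat \<Rightarrow> (nat \<Rightarrow> nat \<Rightarrow> real) \<Rightarrow> bool" where
  "is_metric n D \<longleftrightarrow> (\<forall>i<n. D i i = 0) \<and>
     (\<forall>i<n. \<forall>j<n. \<forall>k<n. D i j \<le> D i k + D j k)"

text \<open>One inner step of the algorithm for the triple (k,i,j); the state carries the
  current matrix and a counter of elementary steps executed (for the running time).\<close>
definition iomr_step :: "nat \<Rightarrow> nat \<Rightarrow> nat \<Rightarrow> (nat \<Rightarrow> nat \<Rightarrow> real) \<times> nat
    \<Rightarrow> (nat \<Rightarrow> nat \<Rightarrow> real) \<times> nat" where
  "iomr_step k i j S = (let D = fst S; c = snd S in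
     (if D i j > D i k + D k j
      then (let v = D i j - D k j in D(i := (D i)(k := v), k := (D k)(i := v)))
      else D, Suc c))"

definition iomr_run :: "nat \<Rightarrow> (nat \<Rightarrow> nat \<Rightarrow> real) \<Rightarrow> (nat \<Rightarrow> nat \<Rightarrow> real) \<times> nat" where
  "iomr_run n D' =
     foldl (\<lambda>S k. foldl (\<lambda>S' i. foldl (\<lambda>S'' j. iomr_step k i j S'') S' [0..<i]) S [0..<n])
       (D', 0) [0..<n]"

definition iomr_perturbation :: "nat \<Rightarrow> (nat \<Rightarrow> nat \<Rightarrow> real) \<Rightarrow> nat \<Rightarrow> nat \<Rightarrow> real" where
  "iomr_perturbation n D' = (\<lambda>i j. fst (iomr_run n D') i j - D' i j)"

definition iomr_cost :: "nat \<Rightarrow> (nat \<Rightarrow> nat \<Rightarrow> real) \<Rightarrow> nat" where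
  "iomr_cost n D' = snd (iomr_run n D')"

end

(*
  Round k of the algorithm only raises entries in row and column k, so during that round the
  matrix is the old one with this column replaced by a vector c.  Processing row i raises c i to
  the largest value D i j - c j over j < i, which makes every triangle with midpoint k hold; and
  each c i is then either the old entry D i k or such a tight value D i j - c j.  The triangles
  through earlier midpoints m < k survive: in the tight case
  D a j - c j <= D a m + D m j - c j <= D a m + c m, using the triangle through k for D m j.  The step counter is increased once per
  triple (k, i, j) with j < i < n.
*)
theory Submission
  imports Defs
begin

lemma fst_foldl_simulation:
  assumes "\<And>S x. fst (f S x) = g (fst S) x"
  shows "fst (foldl f S xs) = foldl g (fst S) xs"
  by (induction xs arbitrary: S) (simp_all add: assms)

lemma snd_foldl_counter:
  assumes "\<And>S x. snd (f S x) = snd S + c x"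
  shows "snd (foldl f S xs) = snd S + (\<Sum>x\<leftarrow>xs. c x)"
  by (induction xs arbitrary: S) (simp_all add: assms add.assoc)

definition iomr_relax :: "nat \<Rightarrow> nat \<Rightarrow> nat \<Rightarrow> (nat \<Rightarrow> nat \<Rightarrow> real) \<Rightarrow> nat \<Rightarrow> nat \<Rightarrow> real" where
  "iomr_relax k i j D = fst (iomr_step k i j (D, 0))"

definition iomr_row :: "nat \<Rightarrow> nat \<Rightarrow> (nat \<Rightarrow> nat \<Rightarrow> real) \<Rightarrow> nat \<Rightarrow> nat \<Rightarrow> real" where
  "iomr_row k i D = foldl (\<lambda>X j. iomr_relax k i j X) D [0..<i]"

definition iomr_round :: "nat \<Rightarrow> nat \<Rightarrow> (nat \<Rightarrow> nat \<Rightarrow> real) \<Rightarrow> nat \<Rightarrow> nat \<Rightarrow> real" where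
  "iomr_round n k D = foldl (\<lambda>X i. iomr_row k i X) D [0..<n]"

lemma fst_iomr_step: "fst (iomr_step k i j S) = iomr_relax k i j (fst S)"
  by (simp add: iomr_relax_def iomr_step_def Let_def)

lemma snd_iomr_step: "snd (iomr_step k i j S) = Suc (snd S)"
  by (simp add: iomr_step_def Let_def)

lemma fst_iomr_run: "fst (iomr_run n D) = foldl (\<lambda>X k. iomr_round n k X) D [0..<n]"
  unfolding iomr_run_def iomr_round_def iomr_row_def
  by (simp add: fst_foldl_simulation fst_iomr_step)

lemma iomr_cost_eq: "iomr_cost n D = n * (\<Sum>i<n. i)"
  unfolding iomr_cost_def iomr_run_def
  by (simp add: snd_foldl_counter snd_iomr_step sum_list_triv atLeast0LessThan)

lemma iomr_cost_le_cube: "iomr_cost n D \<le> n ^ 3"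
proof -
  have "(\<Sum>i<n. i) \<le> card {..<n} * n"
    using sum_bounded_above[of "{..<n}" "\<lambda>i. i" n] by simp
  then show ?thesis
    by (simp add: iomr_cost_eq power3_eq_cube)
qed

text \<open>The replacement is confined to indices below
  \<open>n\<close> because the input is arbitrary (and possibly asymmetric) outside the \<open>n \<times> n\<close> block.\<close>
definition with_column :: "nat \<Rightarrow> nat \<Rightarrow> (nat \<Rightarrow> real) \<Rightarrow> (nat \<Rightarrow> nat \<Rightarrow> real) \<Rightarrow> nat \<Rightarrow> nat \<Rightarrow> real" where
  "with_column n k c D a b =
     (if a = k \<and> b \<noteq> k \<and> b < n then c b else if b = k \<and> a \<noteq> k \<and> a < n then c a else D a b)"

lemma with_column_self:
  assumes "\<forall>a<n. \<forall>b<n. D a b = D b a" and "k < n"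
  shows "with_column n k (\<lambda>a. D a k) D = D"
  using assms by (intro ext) (auto simp: with_column_def)

lemma iomr_relax_with_column:
  fixes c :: "nat \<Rightarrow> real" and D :: "nat \<Rightarrow> nat \<Rightarrow> real"
  assumes "i < n" and "i \<noteq> k"
  defines "X \<equiv> with_column n k c D"
  shows "iomr_relax k i j X =
    with_column n k (if X i j > c i + X k j then c(i := X i j - X k j) else c) D"
  using assms by (intro ext) (auto simp: iomr_relax_def iomr_step_def with_column_def Let_def)

lemma iomr_row_diagonal:
  assumes "X k k = 0"
  shows "iomr_row k k X = X"
proof -
  have "iomr_relax k k j X = X" for j
    using assms by (simp add: iomr_relax_def iomr_step_def)
  then have "foldl (\<lambda>Y j. iomr_relax k k j Y) X js = X" for js
    by (induction js) simp_all
  then show ?thesis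
    unfolding iomr_row_def .
qed

lemma iomr_row_prefix_with_column:
  assumes "i < n" and "i \<noteq> k" and "D k k = 0" and "q \<le> i"
  shows "\<exists>v. foldl (\<lambda>X j. iomr_relax k i j X) (with_column n k c D) [0..<q]
      = with_column n k (c(i := v)) D
    \<and> c i \<le> v \<and> (\<forall>j<q. j \<noteq> k \<longrightarrow> D i j \<le> v + c j)
    \<and> (v = c i \<or> (\<exists>j<q. j \<noteq> k \<and> v = D i j - c j))"
  using assms(4)
proof (induction q)
  case 0
  show ?case
    by (intro exI[of _ "c i"]) simp
next
  case (Suc q)
  then have "q < i"
    by simp
  with Suc.IH obtain v where fold: "foldl (\<lambda>X j. iomr_relax k i j X) (with_column n k c D) [0..<q]
      = with_column n k (c(i := v)) D"
    and ge: "c i \<le> v" and tri: "\<forall>j<q. j \<noteq> k \<longrightarrow> D i j \<le> v + c j"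
    and wit: "v = c i \<or> (\<exists>j<q. j \<noteq> k \<and> v = D i j - c j)"
    by (meson less_imp_le)
  define X where "X = with_column n k (c(i := v)) D"
  have "X i q = (if q = k then v else D i q)" and "X k q = (if q = k then 0 else c q)"
    using assms \<open>q < i\<close> by (auto simp: X_def with_column_def)
  then have relax: "iomr_relax k i q X = with_column n k
      (if q \<noteq> k \<and> D i q > v + c q then c(i := D i q - c q) else c(i := v)) D"
    using iomr_relax_with_column[OF assms(1,2), where c = "c(i := v)" and D = D and j = q]
    by (auto simp: X_def)
  have fold_Suc: "foldl (\<lambda>X j. iomr_relax k i j X) (with_column n k c D) [0..<Suc q]
      = iomr_relax k i q X"
    using fold by (simp add: X_def)
  show ?case
  proof (cases "q \<noteq> k \<and> D i q > v + c q")
    case True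
    with fold_Suc relax have "foldl (\<lambda>X j. iomr_relax k i j X) (with_column n k c D) [0..<Suc q]
        = with_column n k (c(i := D i q - c q)) D"
      by simp
    moreover have "\<forall>j<Suc q. j \<noteq> k \<longrightarrow> D i j \<le> (D i q - c q) + c j"
      using True tri by (auto simp: less_Suc_eq)
    moreover have "c i \<le> D i q - c q"
      using True ge by simp
    moreover have "\<exists>j<Suc q. j \<noteq> k \<and> D i q - c q = D i j - c j"
      using True by blast
    ultimately show ?thesis
      by blast
  next
    case False
    with fold_Suc relax have "foldl (\<lambda>X j. iomr_relax k i j X) (with_column n k c D) [0..<Suc q]
        = with_column n k (c(i := v)) D"
      by simp
    moreover have "\<forall>j<Suc q. j \<noteq> k \<longrightarrow> D i j \<le> v + c j"
      using False tri by (auto simp: less_Suc_eq)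
    moreover have "v = c i \<or> (\<exists>j<Suc q. j \<noteq> k \<and> v = D i j - c j)"
      using wit less_SucI by blast
    ultimately show ?thesis
      using ge by blast
  qed
qed

definition round_invariant :: "nat \<Rightarrow> nat \<Rightarrow> (nat \<Rightarrow> nat \<Rightarrow> real) \<Rightarrow> (nat \<Rightarrow> real) \<Rightarrow> bool" where
  "round_invariant k p D c \<longleftrightarrow> (\<forall>a. p \<le> a \<longrightarrow> c a = D a k) \<and> (\<forall>a<p. D a k \<le> c a)
    \<and> (\<forall>a<p. \<forall>b<a. a \<noteq> k \<longrightarrow> b \<noteq> k \<longrightarrow> D a b \<le> c a + c b)
    \<and> (\<forall>a<p. c a = D a k \<or> (\<exists>j<a. j \<noteq> k \<and> c a = D a j - c j))"

lemma round_invariant_0: "round_invariant k 0 D (\<lambda>a. D a k)"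
  by (simp add: round_invariant_def)

lemma round_invariant_Suc_self:
  assumes "round_invariant k k D c"
  shows "round_invariant k (Suc k) D c"
  using assms by (auto simp: round_invariant_def less_Suc_eq)

lemma round_invariant_Suc:
  assumes inv: "round_invariant k p D c" and "p \<noteq> k" and "c p \<le> v"
    and tri_p: "\<forall>j<p. j \<noteq> k \<longrightarrow> D p j \<le> v + c j"
    and wit_p: "v = c p \<or> (\<exists>j<p. j \<noteq> k \<and> v = D p j - c j)"
  shows "round_invariant k (Suc p) D (c(p := v))"
  unfolding round_invariant_def
proof (intro conjI)
  show "\<forall>a. Suc p \<le> a \<longrightarrow> (c(p := v)) a = D a k"
    and "\<forall>a<Suc p. D a k \<le> (c(p := v)) a"
    and "\<forall>a<Suc p. \<forall>b<a. a \<noteq> k \<longrightarrow> b \<noteq> k \<longrightarrow> D a b \<le> (c(p := v)) a + (c(p := v)) b"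
    using inv \<open>c p \<le> v\<close> tri_p unfolding round_invariant_def by (auto simp: less_Suc_eq)
  show "\<forall>a<Suc p. (c(p := v)) a = D a k \<or> (\<exists>j<a. j \<noteq> k \<and> (c(p := v)) a = D a j - (c(p := v)) j)"
  proof (intro allI impI)
    fix a
    assume "a < Suc p"
    then consider "a = p" | "a < p"
      by linarith
    then show "(c(p := v)) a = D a k \<or> (\<exists>j<a. j \<noteq> k \<and> (c(p := v)) a = D a j - (c(p := v)) j)"
    proof cases
      case 1
      then show ?thesis
        using wit_p inv unfolding round_invariant_def by auto
    next
      case 2
      have upd: "(c(p := v)) a = c a" "\<And>j. j < a \<Longrightarrow> (c(p := v)) j = c j"
        using 2 by simp_all
      from 2 inv consider (old) "c a = D a k"
        | (raised) j where "j < a" and "j \<noteq> k" and "c a = D a j - c j"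
        unfolding round_invariant_def by blast
      then show ?thesis
      proof cases
        case old
        then show ?thesis
          using upd by simp
      next
        case (raised j)
        then show ?thesis
          using upd by (intro disjI2 exI[of _ j]) simp
      qed
    qed
  qed
qed

lemma iomr_round_prefix_with_column:
  assumes sym: "\<forall>a<n. \<forall>b<n. D a b = D b a" and diag: "D k k = 0" and "k < n" and "p \<le> n"
  shows "\<exists>c. foldl (\<lambda>X i. iomr_row k i X) D [0..<p] = with_column n k c D
    \<and> round_invariant k p D c"
  using assms(4)
proof (induction p)
  case 0
  show ?case
    using with_column_self[OF sym \<open>k < n\<close>] round_invariant_0[of k D]
    by (intro exI[of _ "\<lambda>a. D a k"]) simp
next
  case (Suc p)
  then have "p < n"
    by simp
  with Suc.IH obtain c where fold: "foldl (\<lambda>X i. iomr_row k i X) D [0..<p] = with_column n k c D"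
    and inv: "round_invariant k p D c"
    by auto
  have fold_Suc: "foldl (\<lambda>X i. iomr_row k i X) D [0..<Suc p] = iomr_row k p (with_column n k c D)"
    using fold by simp
  show ?case
  proof (cases "p = k")
    case True
    have "with_column n k c D k k = 0"
      using diag by (simp add: with_column_def)
    then show ?thesis
      using fold_Suc True iomr_row_diagonal inv round_invariant_Suc_self by auto
  next
    case False
    obtain v where "iomr_row k p (with_column n k c D) = with_column n k (c(p := v)) D"
      and "round_invariant k (Suc p) D (c(p := v))"
      using iomr_row_prefix_with_column[where c = c and D = D and q = p,
          OF \<open>p < n\<close> False diag order_refl]
        round_invariant_Suc[OF inv False]
      unfolding iomr_row_def by blast
    then show ?thesis
      using fold_Suc by auto
  qed
qed

definition metric_upto :: "nat \<Rightarrow> nat \<Rightarrow> (nat \<Rightarrow> nat \<Rightarrow> real) \<Rightarrow> bool" where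
  "metric_upto n k D \<longleftrightarrow> (\<forall>a<n. \<forall>b<n. D a b = D b a \<and> 0 \<le> D a b) \<and> (\<forall>a<n. D a a = 0)
     \<and> (\<forall>a<n. \<forall>b<n. \<forall>m<k. D a b \<le> D a m + D m b)"

context
  fixes n k :: nat and c :: "nat \<Rightarrow> real" and D :: "nat \<Rightarrow> nat \<Rightarrow> real"
  assumes metric: "metric_upto n k D" and "k < n" and inv: "round_invariant k n D c"
begin

lemma column_ge: "a < n \<Longrightarrow> D a k \<le> c a"
  using inv by (simp add: round_invariant_def)

lemma column_tri: "a < n \<Longrightarrow> b < a \<Longrightarrow> a \<noteq> k \<Longrightarrow> b \<noteq> k \<Longrightarrow> D a b \<le> c a + c b"
  using inv by (simp add: round_invariant_def)

lemma column_witness: "a < n \<Longrightarrow> c a = D a k \<or> (\<exists>j<a. j \<noteq> k \<and> c a = D a j - c j)"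
  using inv by (simp add: round_invariant_def)

lemma column_nonneg: "a < n \<Longrightarrow> 0 \<le> c a"
  using metric column_ge \<open>k < n\<close> unfolding metric_upto_def by (meson order_trans)

lemma le_column_sum:
  assumes "a < n" and "b < n" and "a \<noteq> k" and "b \<noteq> k"
  shows "D a b \<le> c a + c b"
proof -
  consider "b < a" | "a < b" | "a = b"
    by linarith
  then show ?thesis
  proof cases
    case 1
    then show ?thesis
      using column_tri assms by simp
  next
    case 2
    then have "D b a \<le> c b + c a"
      using column_tri assms by simp
    then show ?thesis
      using metric assms unfolding metric_upto_def by auto
  next
    case 3
    then show ?thesis
      using metric assms column_nonneg[of a] unfolding metric_upto_def by simp
  qed
qed

lemma column_le_via_midpoint:
  assumes "a < n" and "a \<noteq> k" and "m < k"
  shows "c a \<le> D a m + c m"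
  using column_witness[OF \<open>a < n\<close>]
proof (elim disjE exE conjE)
  assume "c a = D a k"
  moreover have "D a k \<le> D a m + D m k" and "D m k \<le> c m"
    using metric column_ge assms \<open>k < n\<close> unfolding metric_upto_def by auto
  ultimately show ?thesis
    by simp
next
  fix j
  assume "j < a" and "j \<noteq> k" and "c a = D a j - c j"
  moreover have "D a j \<le> D a m + D m j"
    using metric assms \<open>j < a\<close> unfolding metric_upto_def by simp
  moreover have "D m j \<le> c m + c j"
    using le_column_sum[of m j] assms \<open>j < a\<close> \<open>j \<noteq> k\<close> \<open>k < n\<close> by simp
  ultimately show ?thesis
    by simp
qed

lemma le_with_column:
  assumes "a < n" and "b < n"
  shows "D a b \<le> with_column n k c D a b"
  using assms metric column_ge \<open>k < n\<close> unfolding metric_upto_def with_column_def by auto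

lemma metric_upto_with_column: "metric_upto n (Suc k) (with_column n k c D)"
  unfolding metric_upto_def
proof (intro conjI allI impI)
  fix a b
  assume "a < n" and "b < n"
  then show "with_column n k c D a b = with_column n k c D b a"
    and "0 \<le> with_column n k c D a b"
    using metric column_nonneg \<open>k < n\<close> unfolding metric_upto_def with_column_def by auto
  fix m
  assume "m < Suc k"
  then consider "m = k" | "m < k"
    by linarith
  then show "with_column n k c D a b \<le> with_column n k c D a m + with_column n k c D m b"
  proof cases
    case 1
    then show ?thesis
      using le_column_sum[of a b] \<open>a < n\<close> \<open>b < n\<close> metric unfolding metric_upto_def with_column_def
      by auto
  next
    case 2
    then have "m < n" and "m \<noteq> k"
      using \<open>k < n\<close> by auto
    then show ?thesis
      using column_le_via_midpoint[of a m] column_le_via_midpoint[of b m] column_nonneg[of m]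
        \<open>a < n\<close> \<open>b < n\<close> 2 metric unfolding metric_upto_def with_column_def
      by auto
  qed
next
  fix a
  assume "a < n"
  then show "with_column n k c D a a = 0"
    using metric unfolding metric_upto_def with_column_def by simp
qed

end

lemma metric_upto_iomr_round:
  assumes "metric_upto n k D" and "k < n"
  shows "metric_upto n (Suc k) (iomr_round n k D) \<and> (\<forall>a<n. \<forall>b<n. D a b \<le> iomr_round n k D a b)"
proof -
  have "\<forall>a<n. \<forall>b<n. D a b = D b a" and "D k k = 0"
    using assms unfolding metric_upto_def by auto
  from iomr_round_prefix_with_column[OF this \<open>k < n\<close> order_refl]
  obtain c where "iomr_round n k D = with_column n k c D" and "round_invariant k n D c"
    unfolding iomr_round_def by auto
  with assms show ?thesis
    using metric_upto_with_column le_with_column by simp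
qed

lemma metric_upto_iomr_rounds:
  assumes "metric_upto n 0 D" and "p \<le> n"
  shows "metric_upto n p (foldl (\<lambda>X k. iomr_round n k X) D [0..<p])
    \<and> (\<forall>a<n. \<forall>b<n. D a b \<le> foldl (\<lambda>X k. iomr_round n k X) D [0..<p] a b)"
  using assms(2)
proof (induction p)
  case 0
  show ?case
    using assms(1) by simp
next
  case (Suc p)
  define X where "X = foldl (\<lambda>X k. iomr_round n k X) D [0..<p]"
  have "p < n"
    using Suc.prems by simp
  with Suc.IH have "metric_upto n p X" and D_le: "\<forall>a<n. \<forall>b<n. D a b \<le> X a b"
    unfolding X_def by simp_all
  with \<open>p < n\<close> have "metric_upto n (Suc p) (iomr_round n p X)"
    and X_le: "\<forall>a<n. \<forall>b<n. X a b \<le> iomr_round n p X a b"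
    using metric_upto_iomr_round by blast+
  moreover have "\<forall>a<n. \<forall>b<n. D a b \<le> iomr_round n p X a b"
  proof (intro allI impI)
    fix a b
    assume "a < n" and "b < n"
    then have "D a b \<le> X a b" and "X a b \<le> iomr_round n p X a b"
      using D_le X_le by simp_all
    then show "D a b \<le> iomr_round n p X a b"
      by linarith
  qed
  ultimately show ?case
    unfolding X_def by simp
qed

lemma is_metric_if_metric_upto: "metric_upto n n D \<Longrightarrow> is_metric n D"
  unfolding metric_upto_def is_metric_def by metis

theorem mainTheorem4:
  fixes n :: nat and D' :: "nat \<Rightarrow> nat \<Rightarrow> real"
  assumes sym: "\<forall>i<n. \<forall>j<n. D' i j = D' j i"
    and nonneg: "\<forall>i<n. \<forall>j<n. 0 \<le> D' i j"
    and diag: "\<forall>i<n. D' i i = 0"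
  shows "(\<forall>i<n. \<forall>j<n. 0 \<le> iomr_perturbation n D' i j)
    \<and> is_metric n (\<lambda>i j. D' i j + iomr_perturbation n D' i j)
    \<and> (\<exists>C::nat. \<forall>m (E :: nat \<Rightarrow> nat \<Rightarrow> real). iomr_cost m E \<le> C * m ^ 3)"
proof -
  define X where "X = fst (iomr_run n D')"
  have "metric_upto n 0 D'"
    using assms unfolding metric_upto_def by simp
  then have "metric_upto n n X \<and> (\<forall>i<n. \<forall>j<n. D' i j \<le> X i j)"
    using metric_upto_iomr_rounds[of n D' n] unfolding X_def fst_iomr_run by simp
  moreover have "iomr_perturbation n D' = (\<lambda>i j. X i j - D' i j)"
    unfolding iomr_perturbation_def X_def ..
  moreover have "\<exists>C::nat. \<forall>m (E :: nat \<Rightarrow> nat \<Rightarrow> real). iomr_cost m E \<le> C * m ^ 3"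
    using iomr_cost_le_cube by (intro exI[of _ 1]) simp
  ultimately show ?thesis
    using is_metric_if_metric_upto by auto
qed

end
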